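(* Let $K$ be a field, $P=K[x_1,\dots,x_n]$, $g_1,\dots,g_r\in P\setminus\{0\}$ such that $I=\langle g_1,\dots,g_r\rangle$ is a proper ideal, and let $Z=(z_1,\dots,z_s)$ be a tuple of distinct indeterminates among $x_1,\dots,x_n$. The procedure $\mathrm{OPTCHECK}$ applied to $(g_1,\dots,g_r)$ and $Z$ terminates and returns either ``Fail'' or a tuple $W\in\mathbb{N}^n$. If it returns a tuple $W$, then there exists a $Z$-separating tuple $(f_1,\dots,f_s)$ of polynomials in $I$ such that every term ordering $\sigma$ compatible with the grading given by $W$ satisfies $\operatorname{LT}_\sigma(f_i)=z_i$ for $i=1,\dots,s$.
   Context: $\operatorname{Supp}(f)$ is the set of terms occurring in $f$; $\operatorname{Lin}(f)$ is the homogeneous degree-1 component of $f$; $\langle\cdot\rangle_K$ denotes $K$-linear span; $P_{\le\delta}$ is the set of polynomials of degree $\le\delta$. A tuple $(f_1,\dots,f_s)$ of polynomials in an ideal $I$ is $Z$-separating if there is a term ordering $\sigma$ with $\operatorname{LT}_\sigma(f_i)=z_i$ for all $i$. For $W\in\mathbb{N}^n$ the $W$-degree of $x_1^{a_1}\cdots x_n^{a_n}$ is $\sum w_ia_i$; a term ordering $\sigma$ is compatible with the grading given by $W$ if $t>_\sigma t'$ whenever the $W$-degree of $t$ exceeds that of $t'$. Procedure $\mathrm{LI}$ (linear interreduction), applied to a tuple $Z=(z_1,\dots,z_s)$ of distinct indeterminates and polynomials $g_1,\dots,g_r$: let $t_1>\dots>t_m$ (lexicographic order, $x_1>\dots>x_n$)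 be the terms of $\bigcup_j\operatorname{Supp}(g_j)$ other than $z_1,\dots,z_s$; form the coefficient matrix $M$ of $g_1,\dots,g_r$ w.r.t. column order $(z_1,\dots,z_s,t_1,\dots,t_m)$; output the polynomials whose coefficient vectors are the nonzero rows of the reduced row echelon form of $M$, in order. Procedure $\mathrm{OPTCHECK}$ on input $(g_1,\dots,g_r)$ and $Z$: (1) set $w_1=\dots=w_n=0$, $\delta=\max_j\deg(g_j)$, $d=1$. (2) In each $g_j$ delete every monomial not divisible by some indeterminate of $Z$. (3) If $\dim_K\langle\operatorname{Lin}(g_1),\dots,\operatorname{Lin}(g_r)\rangle_K<\#Z$, return ``Fail''. (4) Repeat: (i) form $H=\{x_ig_j : x_i\text{ an indeterminate not in the current }Z,\ j=1,\dots,r\}$ from the current list; fix a degree-compatible term ordering $\tau$ and compute a $K$-basis $h_1,\dots,h_m$ of $\langle H\rangle_K$ with pairwise distinct $\tau$-leading terms; let $q_1,\dots,q_u$ be those $h_k$ lying in $P_{\le\delta}$; replace the current list by the output of $\mathrm{LI}$ applied to the current $Z$ and $(g_1,\dots,g_r,q_1,\dots,q_u)$; (ii) let $\widetilde Z$ be the set of indeterminates of the current $Z$ that occur as elements of the current list; (iii) if $\widetilde Z=\emptyset$, return ``Fail''; (iv) for each $z\in\widetilde Z$, say $z=x_k$, set $w_k=d$ and remove $z$ from $Z$; (v) in each current $g_j$ delete every monomial not divisible by some indeterminate of the (updated) $Z$; (vi) replace $d$ by $2\delta d+1$; until $Z$ is empty. (5) Return $W=(w_1,\dots,w_n)$. 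*)

theory Defs
  imports Complex_Main "HOL-Library.Poly_Mapping"
begin

text \<open>Terms (power products) are finitely supported exponent vectors nat \<Rightarrow>0 nat;
  the indeterminate x_(i+1) of the paper is the index i (0-based), so
  P = K[x_1,...,x_n] consists of the polynomials all of whose terms only
  involve indices < n.\<close>

type_synonym monom = "nat \<Rightarrow>\<^sub>0 nat"
type_synonym 'a mpoly = "monom \<Rightarrow>\<^sub>0 'a"

definition is_term :: "nat \<Rightarrow> monom \<Rightarrow> bool" where
  "is_term n t \<longleftrightarrow> Poly_Mapping.keys t \<subseteq> {..<n}"

definition in_P :: "nat \<Rightarrow> 'a::zero mpoly \<Rightarrow> bool" where
  "in_P n f \<longleftrightarrow> (\<forall>t\<in>Poly_Mapping.keys f. is_term n t)"

definition var_term :: "nat \<Rightarrow> monom" where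
  "var_term i = Poly_Mapping.single i 1"

definition var :: "nat \<Rightarrow> 'a::{zero,one} mpoly" where
  "var i = Poly_Mapping.single (var_term i) 1"

definition tdeg :: "monom \<Rightarrow> nat" where
  "tdeg t = (\<Sum>i\<in>Poly_Mapping.keys t. Poly_Mapping.lookup t i)"

definition pdeg :: "'a::zero mpoly \<Rightarrow> nat" where
  "pdeg f = Max (tdeg ` Poly_Mapping.keys f)"

definition smul :: "'a::field \<Rightarrow> 'a mpoly \<Rightarrow> 'a mpoly" where
  "smul c f = Poly_Mapping.map (\<lambda>x. c * x) f"

abbreviation kspan :: "'a::field mpoly set \<Rightarrow> 'a mpoly set" where
  "kspan S \<equiv> module.span smul S"

abbreviation kdim :: "'a::field mpoly set \<Rightarrow> nat" where
  "kdim S \<equiv> vector_space.dim smul S"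

abbreviation kindependent :: "'a::field mpoly set \<Rightarrow> bool" where
  "kindependent S \<equiv> module.independent smul S"

definition Lin :: "'a::zero mpoly \<Rightarrow> 'a mpoly" where
  "Lin f = Poly_Mapping.mapp (\<lambda>t a. if tdeg t = 1 then a else 0) f"

definition restrictZ :: "nat set \<Rightarrow> 'a::zero mpoly \<Rightarrow> 'a mpoly" where
  "restrictZ Z f = Poly_Mapping.mapp (\<lambda>t a. if (\<exists>z\<in>Z. 0 < Poly_Mapping.lookup t z) then a else 0) f"

definition ideal_P :: "nat \<Rightarrow> 'a::comm_ring_1 mpoly list \<Rightarrow> 'a mpoly set" where
  "ideal_P n gs = {(\<Sum>i<length gs. hs ! i * gs ! i) | hs.
                     length hs = length gs \<and> (\<forall>h\<in>set hs. in_P n h)}"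

text \<open>A monom ordering on the terms of P, given by its strict part lt
  (lt s t means s < t): a strict linear order on the terms in x_1..x_n,
  compatible with multiplication, with 1 the minimal monom.\<close>
definition term_order :: "nat \<Rightarrow> (monom \<Rightarrow> monom \<Rightarrow> bool) \<Rightarrow> bool" where
  "term_order n lt \<longleftrightarrow>
     (\<forall>s. is_term n s \<longrightarrow> \<not> lt s s) \<and>
     (\<forall>s t u. is_term n s \<and> is_term n t \<and> is_term n u \<and> lt s t \<and> lt t u \<longrightarrow> lt s u) \<and>
     (\<forall>s t. is_term n s \<and> is_term n t \<and> s \<noteq> t \<longrightarrow> lt s t \<or> lt t s) \<and>
     (\<forall>t. is_term n t \<and> t \<noteq> 0 \<longrightarrow> lt 0 t) \<and>
     (\<forall>s t u. is_term n s \<and> is_term n t \<and> is_term n u \<and> lt s t \<longrightarrow> lt (s + u) (t + u))"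

definition is_LT :: "(monom \<Rightarrow> monom \<Rightarrow> bool) \<Rightarrow> 'a::zero mpoly \<Rightarrow> monom \<Rightarrow> bool" where
  "is_LT lt f t \<longleftrightarrow> t \<in> Poly_Mapping.keys f \<and> (\<forall>s\<in>Poly_Mapping.keys f. s \<noteq> t \<longrightarrow> lt s t)"

definition degree_compatible :: "nat \<Rightarrow> (monom \<Rightarrow> monom \<Rightarrow> bool) \<Rightarrow> bool" where
  "degree_compatible n lt \<longleftrightarrow>
     (\<forall>s t. is_term n s \<and> is_term n t \<and> tdeg s < tdeg t \<longrightarrow> lt s t)"

text \<open>W-degree and compatibility with the grading given by W (W as a list of length n)\<close>
definition wdeg :: "nat list \<Rightarrow> monom \<Rightarrow> nat" where
  "wdeg W t = (\<Sum>i<length W. W ! i * Poly_Mapping.lookup t i)"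

definition W_compatible :: "nat \<Rightarrow> nat list \<Rightarrow> (monom \<Rightarrow> monom \<Rightarrow> bool) \<Rightarrow> bool" where
  "W_compatible n W lt \<longleftrightarrow>
     (\<forall>s t. is_term n s \<and> is_term n t \<and> wdeg W s < wdeg W t \<longrightarrow> lt s t)"

definition Z_separating :: "nat \<Rightarrow> nat list \<Rightarrow> 'a::zero mpoly list \<Rightarrow> bool" where
  "Z_separating n Z fs \<longleftrightarrow> length fs = length Z \<and>
     (\<exists>lt. term_order n lt \<and> (\<forall>i<length Z. is_LT lt (fs ! i) (var_term (Z ! i))))"

section \<open>Procedure LI (linear interreduction)\<close>

text \<open>lexicographic order with x_1 > ... > x_n: lex_gt t t' means t >_lex t'\<close>
definition lex_gt :: "monom \<Rightarrow> monom \<Rightarrow> bool" where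
  "lex_gt t t' \<longleftrightarrow> (\<exists>i. Poly_Mapping.lookup t' i < Poly_Mapping.lookup t i \<and> (\<forall>j<i. Poly_Mapping.lookup t j = Poly_Mapping.lookup t' j))"

text \<open>column order (z_1,...,z_s,t_1,...,t_m): col_before Z t t' means that the
  column of t comes strictly before the column of t'\<close>
definition col_before :: "nat list \<Rightarrow> monom \<Rightarrow> monom \<Rightarrow> bool" where
  "col_before Z t t' \<longleftrightarrow>
     (\<exists>k l. k < l \<and> l < length Z \<and> t = var_term (Z ! k) \<and> t' = var_term (Z ! l)) \<or>
     (t \<in> var_term ` set Z \<and> t' \<notin> var_term ` set Z) \<or>
     (t \<notin> var_term ` set Z \<and> t' \<notin> var_term ` set Z \<and> lex_gt t t')"

definition is_pivot :: "nat list \<Rightarrow> 'a::zero mpoly \<Rightarrow> monom \<Rightarrow> bool" where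
  "is_pivot Z p t \<longleftrightarrow> t \<in> Poly_Mapping.keys p \<and> (\<forall>s\<in>Poly_Mapping.keys p. s \<noteq> t \<longrightarrow> col_before Z t s)"

text \<open>LI Z gs ps: ps is the list of polynomials given by the nonzero rows, in order,
  of the reduced row echelon form of the coefficient matrix of gs w.r.t. the
  column order above.  This is the defining property of the reduced row echelon
  form: same row space, nonzero rows, strictly increasing pivot columns, pivot
  entries 1, and all other entries in pivot columns 0.\<close>
definition LI :: "nat list \<Rightarrow> 'a::field mpoly list \<Rightarrow> 'a mpoly list \<Rightarrow> bool" where
  "LI Z gs ps \<longleftrightarrow>
     kspan (set ps) = kspan (set gs) \<and>
     (\<forall>p\<in>set ps. p \<noteq> 0) \<and>
     (\<exists>piv. (\<forall>i<length ps. is_pivot Z (ps ! i) (piv i) \<and> Poly_Mapping.lookup (ps ! i) (piv i) = 1) \<and>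
            (\<forall>i j. i < j \<and> j < length ps \<longrightarrow> col_before Z (piv i) (piv j)) \<and>
            (\<forall>i j. i < length ps \<and> j < length ps \<and> i \<noteq> j \<longrightarrow> Poly_Mapping.lookup (ps ! j) (piv i) = 0))"

section \<open>Procedure OPTCHECK, as a (nondeterministic) transition system\<close>

text \<open>Step 4(i): from the current list gs and current Z, the new list gs'.
  The choices of the degree-compatible monom ordering tau and of the basis hs
  are arbitrary.\<close>
definition step_i :: "nat \<Rightarrow> nat \<Rightarrow> 'a::field mpoly list \<Rightarrow> nat list \<Rightarrow> 'a mpoly list \<Rightarrow> bool" where
  "step_i n \<delta> gs Z gs' \<longleftrightarrow>
     (let H = [var i * g. i \<leftarrow> [0..<n], i \<notin> set Z, g \<leftarrow> gs] in
      \<exists>tau hs.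
        term_order n tau \<and> degree_compatible n tau \<and>
        distinct hs \<and> kindependent (set hs) \<and> kspan (set hs) = kspan (set H) \<and>
        (\<forall>i j. i < j \<and> j < length hs \<longrightarrow>
              \<not> (\<exists>t. is_LT tau (hs ! i) t \<and> is_LT tau (hs ! j) t)) \<and>
        (\<forall>i<length hs. \<exists>t. is_LT tau (hs ! i) t) \<and>
        LI Z (gs @ filter (\<lambda>h. pdeg h \<le> \<delta>) hs) gs')"

datatype 'p oc_config =
    Run "'p list" "nat list" "nat \<Rightarrow> nat" nat  \<comment> \<open>current list, Z, weights w, d\<close>
  | Done "nat list option"   \<comment> \<open>None = Fail, Some W = return W\<close>

text \<open>initial configuration (steps 1--3)\<close>
definition oc_init :: "nat \<Rightarrow> 'a::field mpoly list \<Rightarrow> nat list \<Rightarrow> 'a mpoly oc_config" where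
  "oc_init n gs Z =
     (let gs1 = map (restrictZ (set Z)) gs in
      if kdim (kspan (set (map Lin gs1))) < length Z then Done None
      else Run gs1 Z (\<lambda>_. 0) 1)"

definition delta :: "'a::zero mpoly list \<Rightarrow> nat" where
  "delta gs = Max (set (map pdeg gs))"

text \<open>one pass (i)--(vi) through the loop of step 4, followed by the "until Z is empty" test\<close>
inductive oc_step :: "nat \<Rightarrow> nat \<Rightarrow> 'a::field mpoly oc_config \<Rightarrow> 'a mpoly oc_config \<Rightarrow> bool"
  for n :: nat and \<delta> :: nat where
  fail: "\<lbrakk> step_i n \<delta> gs Z gs';
          {z \<in> set Z. var z \<in> set gs'} = {} \<rbrakk>
        \<Longrightarrow> oc_step n \<delta> (Run gs Z w d) (Done None)"
| cont: "\<lbrakk> step_i n \<delta> gs Z gs';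
          Zt = {z \<in> set Z. var z \<in> set gs'}; Zt \<noteq> {};
          Z' = filter (\<lambda>z. z \<notin> Zt) Z;
          w' = (\<lambda>k. if k \<in> Zt then d else w k);
          gs'' = map (restrictZ (set Z')) gs';
          d' = 2 * \<delta> * d + 1;
          c' = (if Z' = [] then Done (Some (map w' [0..<n])) else Run gs'' Z' w' d') \<rbrakk>
        \<Longrightarrow> oc_step n \<delta> (Run gs Z w d) c'"

definition oc_reachable :: "nat \<Rightarrow> 'a::field mpoly list \<Rightarrow> nat list \<Rightarrow> 'a mpoly oc_config \<Rightarrow> bool" where
  "oc_reachable n gs Z c \<longleftrightarrow> (oc_step n (delta gs))\<^sup>*\<^sup>* (oc_init n gs Z) c"

end

theory Submission
  imports Defs
begin

text \<open>
  Every polynomial in the current list differs from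
  some element of I only by tail terms that avoid the indeterminates still in Z and have W-weight
  below a bound B, and every indeterminate z already removed from Z has a separator z + J in I
  whose tail J is W-lighter than z. As all current weights satisfy w_i + B \<le> d, multiplying by an
  indeterminate outside Z and interreducing keeps the tails below d; an indeterminate z that then
  occurs in the list gets weight d, which turns z + J into a separator. Deleting the monomials not
  divisible by the remaining indeterminates creates tails of weight at most d\<delta>, which is why d is
  replaced by 2\<delta>d + 1. Once Z is empty, every separator z + J has leading term z for each term
  ordering compatible with W. The procedure terminates because Z shrinks in every pass.
\<close>

abbreviation lookup :: "('a \<Rightarrow>\<^sub>0 'b::zero) \<Rightarrow> 'a \<Rightarrow> 'b" where
  "lookup \<equiv> Poly_Mapping.lookup"

abbreviation keys :: "('a \<Rightarrow>\<^sub>0 'b::zero) \<Rightarrow> 'a set" where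
  "keys \<equiv> Poly_Mapping.keys"

lemma smul_eq_mult: "smul c f = Poly_Mapping.single 0 c * f"
  unfolding smul_def by (rule mult_map_scale_conv_mult)

interpretation K: vector_space "smul :: 'a::field \<Rightarrow> 'a mpoly \<Rightarrow> 'a mpoly"
  by unfold_locales (auto simp: smul_eq_mult algebra_simps mult_single single_add)

lemma lookup_smul [simp]: "lookup (smul c f) t = c * lookup f t"
  unfolding smul_def by (simp add: map.rep_eq when_def)

lemma keys_smul_subset: "keys (smul c f) \<subseteq> keys (f :: 'a::field mpoly)"
  by (auto simp: in_keys_iff)

lemma subspace_keys_subset: "K.subspace {p :: 'a::field mpoly. keys p \<subseteq> T}"
proof (rule K.subspaceI)
  fix x y :: "'a mpoly" assume "x \<in> {p. keys p \<subseteq> T}" "y \<in> {p. keys p \<subseteq> T}"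
  then show "x + y \<in> {p. keys p \<subseteq> T}" using keys_add[of x y] by blast
next
  fix c and x :: "'a mpoly" assume "x \<in> {p. keys p \<subseteq> T}"
  then show "smul c x \<in> {p. keys p \<subseteq> T}" using keys_smul_subset[of c x] by blast
qed simp

lemma span_keys_subset:
  assumes "\<forall>x\<in>S. keys x \<subseteq> T" and "p \<in> kspan S"
  shows "keys p \<subseteq> T"
  using K.span_minimal[OF _ subspace_keys_subset, of S T] assms by blast

lemma span_insert_cong: "kspan S = kspan S' \<Longrightarrow> kspan (insert a S) = kspan (insert a S')"
  by (simp add: K.span_insert)

lemma span_insert_eliminate:
  "kspan (insert p ((\<lambda>x. x - smul (c x) p) ` S)) = kspan (insert p S)"
proof -
  have "x \<in> kspan (insert p ((\<lambda>x. x - smul (c x) p) ` S))" if "x \<in> S" for x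
  proof -
    have "x - smul (c x) p + smul (c x) p \<in> kspan (insert p ((\<lambda>x. x - smul (c x) p) ` S))"
      using that by (intro K.span_add K.span_scale K.span_base) auto
    then show ?thesis by simp
  qed
  then show ?thesis
    unfolding K.span_eq by (auto intro: K.span_base K.span_diff K.span_scale)
qed

lemma span_pivot_row:
  assumes "p0 \<in> kspan (set xs)" and "kspan (set ps') = kspan (set (map (\<lambda>x. x - smul (c x) p0) xs))"
    and "p0 - p1 \<in> kspan (set ps')"
  shows "kspan (set (p1 # ps')) = kspan (set xs)"
proof -
  have "kspan (set (p1 # ps')) = kspan (insert p0 (set ps'))"
    using K.eq_span_insert_eq[OF assms(3)] by simp
  also have "\<dots> = kspan (insert p0 ((\<lambda>x. x - smul (c x) p0) ` set xs))"
    using span_insert_cong[OF assms(2)] by simp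
  also have "\<dots> = kspan (set xs)"
    using span_insert_eliminate[of p0 c "set xs"] K.span_redundant[OF assms(1)] by simp
  finally show ?thesis .
qed

lemma lex_gt_irrefl: "\<not> lex_gt t t"
  unfolding lex_gt_def by auto

lemma transp_lex_gt: "transp lex_gt"
proof (rule transpI)
  fix a b c assume "lex_gt a b" "lex_gt b c"
  then obtain i k where i: "lookup b i < lookup a i" "\<forall>j<i. lookup a j = lookup b j"
    and k: "lookup c k < lookup b k" "\<forall>j<k. lookup b j = lookup c j"
    unfolding lex_gt_def by blast
  show "lex_gt a c"
    unfolding lex_gt_def using i k
    by (cases i k rule: linorder_cases) (auto intro!: exI[of _ "min i k"])
qed

lemma totalp_lex_gt: "totalp lex_gt"
proof (rule totalpI)
  fix s t :: monom assume "s \<noteq> t"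
  then have "\<exists>i. lookup s i \<noteq> lookup t i" by (meson poly_mapping_eqI)
  define i where "i = (LEAST i. lookup s i \<noteq> lookup t i)"
  have "lookup s i \<noteq> lookup t i" unfolding i_def by (rule LeastI_ex) fact
  moreover have "\<forall>j<i. lookup s j = lookup t j" unfolding i_def using not_less_Least by blast
  ultimately show "lex_gt s t \<or> lex_gt t s"
    unfolding lex_gt_def by (metis linorder_neqE_nat)
qed

lemma lex_gt_add: "lex_gt s t \<Longrightarrow> lex_gt (s + u) (t + u)"
  unfolding lex_gt_def by (auto simp: lookup_add)

lemma lex_gt_zero: "t \<noteq> 0 \<Longrightarrow> lex_gt t 0"
  using totalpD[OF totalp_lex_gt, of t 0] by (auto simp: lex_gt_def)

definition weight_lex :: "(monom \<Rightarrow> nat) \<Rightarrow> monom \<Rightarrow> monom \<Rightarrow> bool" where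
  "weight_lex f s t \<longleftrightarrow> f s < f t \<or> (f s = f t \<and> lex_gt t s)"

lemma weight_lex_irrefl: "\<not> weight_lex f t t"
  unfolding weight_lex_def using lex_gt_irrefl by auto

lemma transp_weight_lex: "transp (weight_lex f)"
  using transp_lex_gt unfolding weight_lex_def transp_def by fastforce

lemma totalp_weight_lex: "totalp (weight_lex f)"
  using totalp_lex_gt unfolding weight_lex_def totalp_on_def by fastforce

lemma term_order_weight_lex:
  assumes add: "\<And>s t. f (s + t) = f s + f t"
  shows "term_order n (weight_lex f)"
proof -
  have "f 0 = 0" using add[of 0 0] by simp
  then show ?thesis
    unfolding term_order_def
  proof (intro conjI allI impI)
    fix t :: monom assume "is_term n t \<and> t \<noteq> 0"
    then show "weight_lex f 0 t" unfolding weight_lex_def using lex_gt_zero \<open>f 0 = 0\<close> by auto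
  next
    fix s t u :: monom assume "is_term n s \<and> is_term n t \<and> is_term n u \<and> weight_lex f s t"
    then show "weight_lex f (s + u) (t + u)" unfolding weight_lex_def using lex_gt_add[of t s u] add by auto
  qed (use weight_lex_irrefl transpD[OF transp_weight_lex] totalpD[OF totalp_weight_lex] in blast)+
qed

definition weight :: "(nat \<Rightarrow> nat) \<Rightarrow> monom \<Rightarrow> nat" where
  "weight w t = (\<Sum>i\<in>keys t. w i * lookup t i)"

lemma weight_eq_sum: "finite A \<Longrightarrow> keys t \<subseteq> A \<Longrightarrow> weight w t = (\<Sum>i\<in>A. w i * lookup t i)"
  unfolding weight_def by (intro sum.mono_neutral_left) (auto simp: in_keys_iff)

lemma weight_add: "weight w (s + t) = weight w s + weight w t"
proof -
  let ?A = "keys s \<union> keys t"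
  have "weight w (s + t) = (\<Sum>i\<in>?A. w i * lookup (s + t) i)"
    using keys_add[of s t] by (intro weight_eq_sum) auto
  also have "\<dots> = (\<Sum>i\<in>?A. w i * lookup s i) + (\<Sum>i\<in>?A. w i * lookup t i)"
    by (simp add: lookup_add algebra_simps sum.distrib)
  also have "\<dots> = weight w s + weight w t"
    by (subst (1 2) weight_eq_sum[of ?A]) auto
  finally show ?thesis .
qed

lemma weight_var_term [simp]: "weight w (var_term i) = w i"
  unfolding weight_def var_term_def by simp

lemma weight_cong: "(\<And>i. i \<in> keys t \<Longrightarrow> w i = w' i) \<Longrightarrow> weight w t = weight w' t"
  unfolding weight_def by (rule sum.cong) auto

lemma weight_le_tdeg: "(\<And>i. i \<in> keys t \<Longrightarrow> w i \<le> c) \<Longrightarrow> weight w t \<le> c * tdeg t"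
  unfolding weight_def tdeg_def sum_distrib_left by (rule sum_mono) simp

lemma tdeg_eq_weight: "tdeg t = weight (\<lambda>_. 1) t"
  unfolding tdeg_def weight_def by simp

lemma wdeg_eq_weight: "is_term n t \<Longrightarrow> wdeg (map w [0..<n]) t = weight w t"
  unfolding wdeg_def is_term_def by (subst weight_eq_sum[of "{..<n}"]) auto

lemma wdeg_add: "wdeg W (s + t) = wdeg W s + wdeg W t"
  unfolding wdeg_def by (simp add: lookup_add algebra_simps sum.distrib)

section \<open>Reduced row echelon form\<close>

text \<open>R s t means that column s comes before column t; piv i is the pivot column of row i.\<close>
definition is_rref :: "(monom \<Rightarrow> monom \<Rightarrow> bool) \<Rightarrow> 'a::field mpoly list \<Rightarrow> (nat \<Rightarrow> monom) \<Rightarrow> bool" where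
  "is_rref R ps piv \<longleftrightarrow>
     (\<forall>i<length ps. lookup (ps ! i) (piv i) = 1 \<and> (\<forall>s\<in>keys (ps ! i). s \<noteq> piv i \<longrightarrow> R (piv i) s)) \<and>
     (\<forall>i j. i < j \<and> j < length ps \<longrightarrow> R (piv i) (piv j)) \<and>
     (\<forall>i j. i < length ps \<and> j < length ps \<and> i \<noteq> j \<longrightarrow> lookup (ps ! j) (piv i) = 0)"

lemma is_rrefD:
  assumes "is_rref R ps piv" and "i < length ps"
  shows "lookup (ps ! i) (piv i) = 1" and "piv i \<in> keys (ps ! i)"
    and "\<And>s. s \<in> keys (ps ! i) \<Longrightarrow> s \<noteq> piv i \<Longrightarrow> R (piv i) s"
    and "\<And>j. i < j \<Longrightarrow> j < length ps \<Longrightarrow> R (piv i) (piv j)"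
    and "\<And>j. j < length ps \<Longrightarrow> i \<noteq> j \<Longrightarrow> lookup (ps ! j) (piv i) = 0"
  using assms unfolding is_rref_def by (auto simp: in_keys_iff)

lemma is_rref_Nil: "is_rref R [] piv"
  unfolding is_rref_def by simp

lemma is_rref_Cons:
  assumes rref: "is_rref R ps piv"
    and lead: "lookup p m = 1" "\<forall>s\<in>keys p. s \<noteq> m \<longrightarrow> R m s"
    and col: "\<forall>i<length ps. lookup (ps ! i) m = 0 \<and> lookup p (piv i) = 0 \<and> R m (piv i)"
  shows "is_rref R (p # ps) (case_nat m piv)"
  unfolding is_rref_def
proof (intro conjI allI impI)
  fix i assume i: "i < length (p # ps)"
  show "lookup ((p # ps) ! i) (case_nat m piv i) = 1"
  proof (cases i)
    case (Suc k) then show ?thesis using is_rrefD(1)[OF rref, of k] i by simp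
  qed (use lead in simp)
  show "\<forall>s\<in>keys ((p # ps) ! i). s \<noteq> case_nat m piv i \<longrightarrow> R (case_nat m piv i) s"
  proof (cases i)
    case (Suc k) then show ?thesis using is_rrefD(3)[OF rref, of k] i by simp
  qed (use lead in simp)
next
  fix i j assume ij: "i < j \<and> j < length (p # ps)"
  then obtain l where l: "j = Suc l" by (cases j) auto
  show "R (case_nat m piv i) (case_nat m piv j)"
  proof (cases i)
    case 0 then show ?thesis using l ij col by simp
  next
    case (Suc k) then show ?thesis using l ij is_rrefD(4)[OF rref, of k l] by simp
  qed
next
  fix i j assume ij: "i < length (p # ps) \<and> j < length (p # ps) \<and> i \<noteq> j"
  show "lookup ((p # ps) ! j) (case_nat m piv i) = 0"
  proof (cases i)
    case 0
    then obtain l where "j = Suc l" using ij by (cases j) auto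
    then show ?thesis using 0 ij col by simp
  next
    case (Suc k)
    show ?thesis
    proof (cases j)
      case 0 then show ?thesis using Suc ij col by simp
    next
      case (Suc l) then show ?thesis using \<open>i = Suc k\<close> ij is_rrefD(5)[OF rref, of k l] by simp
    qed
  qed
qed

lemma lookup_reduce_is_rref:
  assumes rref: "is_rref R ps piv" and j: "j < length ps"
  shows "lookup (p - (\<Sum>i<length ps. smul (lookup p (piv i)) (ps ! i))) (piv j) = 0"
proof -
  have "(\<Sum>i<length ps. lookup p (piv i) * lookup (ps ! i) (piv j))
        = (\<Sum>i<length ps. if i = j then lookup p (piv j) else 0)"
    using is_rrefD(1,5)[OF rref] j by (intro sum.cong) auto
  then show ?thesis
    using j by (simp add: lookup_minus lookup_sum)
qed

lemma is_rref_independent: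
  assumes rref: "is_rref R ps piv"
  shows "kindependent (set ps)"
  unfolding K.independent_explicit_module
proof (intro allI impI)
  fix t u v
  assume t: "finite t" "t \<subseteq> set ps" and sum0: "(\<Sum>v\<in>t. smul (u v) v) = 0" and v: "v \<in> t"
  have "v \<in> set ps" using v t(2) by blast
  then obtain i where i: "i < length ps" "v = ps ! i" by (auto simp: in_set_conv_nth)
  have "\<forall>v'\<in>t - {v}. lookup v' (piv i) = 0"
  proof
    fix v' assume v': "v' \<in> t - {v}"
    then have "v' \<in> set ps" using t(2) by blast
    then obtain j where j: "j < length ps" "v' = ps ! j"
      by (auto simp: in_set_conv_nth)
    then have "j \<noteq> i" using v' i(2) by auto
    then show "lookup v' (piv i) = 0" using is_rrefD(5)[OF rref i(1) j(1)] j(2) by simp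
  qed
  have "0 = lookup (\<Sum>v\<in>t. smul (u v) v) (piv i)"
    using sum0 by simp
  also have "\<dots> = (\<Sum>v'\<in>t. u v' * lookup v' (piv i))"
    by (simp add: lookup_sum)
  also have "\<dots> = u v * lookup v (piv i)"
    using \<open>\<forall>v'\<in>t - {v}. lookup v' (piv i) = 0\<close> t(1) v by (simp add: sum.remove)
  finally show "u v = 0"
    using is_rrefD(1)[OF rref i(1)] i by simp
qed

lemma is_rref_distinct:
  assumes rref: "is_rref R ps piv"
  shows "distinct ps"
  unfolding distinct_conv_nth
proof (intro allI impI)
  fix i j assume ij: "i < length ps" "j < length ps" "i \<noteq> j"
  then have "lookup (ps ! j) (piv i) \<noteq> lookup (ps ! i) (piv i)"
    using is_rrefD(1,5)[OF rref] by simp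
  then show "ps ! i \<noteq> ps ! j" by auto
qed

lemma finite_has_least:
  assumes "transp R" "totalp R" "finite T" "T \<noteq> {}"
  shows "\<exists>m\<in>T. \<forall>x\<in>T. x \<noteq> m \<longrightarrow> R m x"
  using assms(3,4)
proof (induction T rule: finite_ne_induct)
  case (insert x F)
  then obtain m where m: "m \<in> F" "\<forall>y\<in>F. y \<noteq> m \<longrightarrow> R m y" by blast
  show ?case
  proof (cases "R x m")
    case True
    have "R x y" if "y \<in> insert x F" "y \<noteq> x" for y
      using that m True transpD[OF assms(1), of x m y] by (cases "y = m") auto
    then show ?thesis by blast
  next
    case False
    then have "R m x" using totalpD[OF assms(2), of x m] m(1) insert.hyps by auto
    then show ?thesis using m by blast
  qed
qed simp

lemma is_rref_Cons_reduced:
  assumes rref: "is_rref R ps piv" and ps: "\<forall>q\<in>set ps. keys q \<subseteq> T - {m}"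
    and least: "\<forall>x\<in>T. x \<noteq> m \<longrightarrow> R m x" and p: "keys p \<subseteq> T" "lookup p m = 1"
  shows "is_rref R ((p - (\<Sum>i<length ps. smul (lookup p (piv i)) (ps ! i))) # ps) (case_nat m piv)"
proof (rule is_rref_Cons[OF rref])
  let ?p = "p - (\<Sum>i<length ps. smul (lookup p (piv i)) (ps ! i))"
  have keys_ps: "keys (ps ! i) \<subseteq> T - {m}" if "i < length ps" for i
    using ps nth_mem[OF that] by blast
  have lookup_m: "lookup (ps ! i) m = 0" if "i < length ps" for i
    using keys_ps[OF that] by (auto simp: in_keys_iff)
  have "?p \<in> kspan (insert p (set ps))"
    by (intro K.span_diff K.span_sum K.span_scale K.span_base) auto
  moreover have "\<forall>q\<in>insert p (set ps). keys q \<subseteq> T"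
    using ps p(1) by blast
  ultimately have "keys ?p \<subseteq> T"
    using span_keys_subset by blast
  then show "\<forall>s\<in>keys ?p. s \<noteq> m \<longrightarrow> R m s"
    using least by blast
  show "lookup ?p m = 1"
    using p(2) lookup_m by (simp add: lookup_minus lookup_sum)
  show "\<forall>i<length ps. lookup (ps ! i) m = 0 \<and> lookup ?p (piv i) = 0 \<and> R m (piv i)"
  proof (intro allI impI conjI)
    fix i assume i: "i < length ps"
    show "lookup (ps ! i) m = 0" using lookup_m[OF i] .
    show "lookup ?p (piv i) = 0" using lookup_reduce_is_rref[OF rref i] .
    show "R m (piv i)" using keys_ps[OF i] is_rrefD(2)[OF rref i] least by blast
  qed
qed

text \<open>Gaussian elimination, one column at a time from the R-least one.\<close>
lemma rref_exists:
  assumes trans: "transp R" and total: "totalp R"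
    and "finite T" and "\<forall>x\<in>set xs. keys x \<subseteq> T"
  shows "\<exists>ps piv. kspan (set ps) = kspan (set xs) \<and> is_rref R ps piv"
  using assms(3,4)
proof (induction T arbitrary: xs rule: finite_remove_induct)
  case empty
  then have "set xs \<subseteq> {0}" by auto
  then have "kspan (set []) = kspan (set xs)"
    unfolding K.span_eq by (auto simp: K.span_zero)
  then show ?case using is_rref_Nil by blast
next
  case (remove T)
  obtain m where m: "m \<in> T" "\<forall>x\<in>T. x \<noteq> m \<longrightarrow> R m x"
    using finite_has_least[OF trans total remove.hyps(1,2)] by blast
  show ?case
  proof (cases "\<exists>x\<in>set xs. lookup x m \<noteq> 0")
    case False
    then have "\<forall>x\<in>set xs. keys x \<subseteq> T - {m}"
      using remove.prems by (auto simp: in_keys_iff)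
    then show ?thesis using remove.IH[OF m(1)] by blast
  next
    case True
    then obtain x0 where x0: "x0 \<in> set xs" "lookup x0 m \<noteq> 0" by blast
    define p0 where "p0 = smul (1 / lookup x0 m) x0"
    define xs' where "xs' = map (\<lambda>x. x - smul (lookup x m) p0) xs"
    have p0: "p0 \<in> kspan (set xs)" "lookup p0 m = 1"
      unfolding p0_def using x0 by (auto intro: K.span_scale K.span_base)
    have keys_xs': "\<forall>x\<in>set xs'. keys x \<subseteq> T - {m}"
    proof
      fix y assume "y \<in> set xs'"
      then obtain x where x: "x \<in> set xs" "y = x - smul (lookup x m) p0" unfolding xs'_def by auto
      then have "y \<in> kspan (set xs)" using p0(1) by (auto intro: K.span_diff K.span_scale K.span_base)
      then have "keys y \<subseteq> T" using span_keys_subset remove.prems by blast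
      moreover have "lookup y m = 0" using x p0(2) by (simp add: lookup_minus)
      ultimately show "keys y \<subseteq> T - {m}" by (auto simp: in_keys_iff)
    qed
    then obtain ps' piv' where ps': "kspan (set ps') = kspan (set xs')" "is_rref R ps' piv'"
      using remove.IH[OF m(1)] by blast
    have keys_ps': "\<forall>q\<in>set ps'. keys q \<subseteq> T - {m}"
    proof
      fix q assume "q \<in> set ps'"
      then have "q \<in> kspan (set xs')" using ps'(1) K.span_base by blast
      then show "keys q \<subseteq> T - {m}" using span_keys_subset keys_xs' by blast
    qed
    define p1 where "p1 = p0 - (\<Sum>i<length ps'. smul (lookup p0 (piv' i)) (ps' ! i))"
    have "p0 - p1 \<in> kspan (set ps')"
      unfolding p1_def by (simp, intro K.span_sum K.span_scale K.span_base) simp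
    then have "kspan (set (p1 # ps')) = kspan (set xs)"
      using span_pivot_row[OF p0(1) ps'(1)[unfolded xs'_def]] by blast
    moreover have "is_rref R (p1 # ps') (case_nat m piv')"
      unfolding p1_def
      using is_rref_Cons_reduced[OF ps'(2) keys_ps' m(2) span_keys_subset[OF remove.prems p0(1)] p0(2)] .
    ultimately show ?thesis by blast
  qed
qed

lemma is_term_add: "is_term n s \<Longrightarrow> is_term n t \<Longrightarrow> is_term n (s + t)"
  unfolding is_term_def using keys_add[of s t] by blast

lemma is_term_var_term: "i < n \<Longrightarrow> is_term n (var_term i)"
  unfolding is_term_def var_term_def by simp

lemma keys_var [simp]: "keys (var i :: 'a::zero_neq_one mpoly) = {var_term i}"
  unfolding var_def by simp

lemma in_P_add: "in_P n f \<Longrightarrow> in_P n g \<Longrightarrow> in_P n (f + g)"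
  unfolding in_P_def using keys_add[of f g] by blast

lemma in_P_mult: "in_P n f \<Longrightarrow> in_P n g \<Longrightarrow> in_P n (f * g)"
  unfolding in_P_def using keys_mult[of f g] is_term_add by blast

lemma in_P_sum: "(\<And>i. i \<in> I \<Longrightarrow> in_P n (f i)) \<Longrightarrow> in_P n (sum f I)"
  unfolding in_P_def using keys_sum[of f I] by blast

lemma in_P_const: "in_P n (Poly_Mapping.single 0 c)"
  unfolding in_P_def is_term_def by simp

lemma in_P_var: "i < n \<Longrightarrow> in_P n (var i :: 'a::zero_neq_one mpoly)"
  unfolding in_P_def using is_term_var_term by simp

lemma ideal_P_iff:
  "F \<in> ideal_P n gs \<longleftrightarrow> (\<exists>hs. length hs = length gs \<and> (\<forall>i<length gs. in_P n (hs ! i))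
                               \<and> F = (\<Sum>i<length gs. hs ! i * gs ! i))"
  unfolding ideal_P_def by (auto simp: all_set_conv_all_nth)

lemma ideal_P_combination:
  assumes "\<And>i. i < length gs \<Longrightarrow> in_P n (h i)"
  shows "(\<Sum>i<length gs. h i * gs ! i) \<in> ideal_P n gs"
  unfolding ideal_P_iff using assms by (intro exI[of _ "map h [0..<length gs]"]) auto

lemma in_P_of_ideal_P:
  assumes "\<forall>g\<in>set gs. in_P n g" and "F \<in> ideal_P n gs"
  shows "in_P n F"
  using assms unfolding ideal_P_iff by (auto intro!: in_P_sum in_P_mult)

lemma ideal_P_add:
  assumes "F \<in> ideal_P n gs" "G \<in> ideal_P n gs"
  shows "F + G \<in> ideal_P n gs"
proof -
  obtain hs ks where "\<forall>i<length gs. in_P n (hs ! i)" "\<forall>i<length gs. in_P n (ks ! i)"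
    and "F + G = (\<Sum>i<length gs. (hs ! i + ks ! i) * gs ! i)"
    using assms unfolding ideal_P_iff by (auto simp: sum.distrib algebra_simps)
  then show ?thesis using ideal_P_combination[of gs n "\<lambda>i. hs ! i + ks ! i"] by (simp add: in_P_add)
qed

lemma ideal_P_mult:
  assumes "F \<in> ideal_P n gs" "in_P n q"
  shows "q * F \<in> ideal_P n gs"
proof -
  obtain hs where "\<forall>i<length gs. in_P n (hs ! i)"
    and "q * F = (\<Sum>i<length gs. (q * hs ! i) * gs ! i)"
    using assms(1) unfolding ideal_P_iff by (auto simp: sum_distrib_left algebra_simps)
  then show ?thesis
    using assms(2) ideal_P_combination[of gs n "\<lambda>i. q * hs ! i"] by (simp add: in_P_mult)
qed

lemma ideal_P_generator:
  assumes "g \<in> set (gs :: 'a::comm_ring_1 mpoly list)"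
  shows "g \<in> ideal_P n gs"
proof -
  obtain k where k: "k < length gs" "g = gs ! k" using assms by (auto simp: in_set_conv_nth)
  have "(\<Sum>i<length gs. (if i = k then 1 else 0) * gs ! i) = (\<Sum>i<length gs. if i = k then g else 0)"
    using k by (intro sum.cong) auto
  also have "\<dots> = g" using k by simp
  finally have "g = (\<Sum>i<length gs. (if i = k then 1 else 0) * gs ! i)" ..
  also have "\<dots> \<in> ideal_P n gs"
    by (rule ideal_P_combination) (simp add: in_P_def is_term_def)
  finally show ?thesis .
qed

lemma subspace_ideal_P: "K.subspace (ideal_P n (gs :: 'a::field mpoly list))"
proof (rule K.subspaceI)
  show "0 \<in> ideal_P n gs"
    using ideal_P_combination[of gs n "\<lambda>_. 0"] by (simp add: in_P_def)
qed (auto simp: smul_eq_mult intro: ideal_P_add ideal_P_mult in_P_const)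

section \<open>Existence of a step (i)\<close>

lemma var_term_inj: "var_term i = var_term j \<Longrightarrow> i = j"
  unfolding var_term_def by (metis lookup_single_eq lookup_single_not_eq zero_neq_one)

lemma transp_col_before:
  assumes "distinct Z"
  shows "transp (col_before Z)"
proof (rule transpI)
  fix a b c assume ab: "col_before Z a b" and bc: "col_before Z b c"
  let ?V = "var_term ` set Z"
  show "col_before Z a c"
  proof (cases "b \<in> ?V")
    case True
    then obtain k l where kl: "k < l" "l < length Z" "a = var_term (Z ! k)" "b = var_term (Z ! l)"
      using ab unfolding col_before_def by auto
    show ?thesis
    proof (cases "c \<in> ?V")
      case True
      then obtain l' r where lr: "l' < r" "r < length Z" "b = var_term (Z ! l')" "c = var_term (Z ! r)"
        using bc \<open>b \<in> ?V\<close> unfolding col_before_def by auto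
      have "l = l'"
        using kl lr var_term_inj assms by (metis nth_eq_iff_index_eq order.strict_trans)
      then show ?thesis using kl lr unfolding col_before_def by (metis order.strict_trans)
    next
      case False
      then show ?thesis using kl unfolding col_before_def by auto
    qed
  next
    case False
    then have c: "c \<notin> ?V" "lex_gt b c" using bc unfolding col_before_def by auto
    show ?thesis
    proof (cases "a \<in> ?V")
      case True
      then show ?thesis using c unfolding col_before_def by blast
    next
      case False
      then have "lex_gt a b" using ab \<open>b \<notin> ?V\<close> unfolding col_before_def by auto
      then show ?thesis
        using c False transpD[OF transp_lex_gt] unfolding col_before_def by blast
    qed
  qed
qed

lemma totalp_col_before: "totalp (col_before Z)"
proof (rule totalpI)
  fix a b :: monom assume "a \<noteq> b"
  show "col_before Z a b \<or> col_before Z b a"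
  proof (cases "a \<in> var_term ` set Z \<and> b \<in> var_term ` set Z")
    case True
    then obtain k l where "k < length Z" "l < length Z" "a = var_term (Z ! k)" "b = var_term (Z ! l)"
      by (auto simp: in_set_conv_nth)
    then show ?thesis
      using \<open>a \<noteq> b\<close> unfolding col_before_def by (metis linorder_neqE_nat)
  next
    case False
    then show ?thesis
      using totalpD[OF totalp_lex_gt \<open>a \<noteq> b\<close>] unfolding col_before_def by blast
  qed
qed

lemma LI_exists:
  assumes "distinct Z"
  shows "\<exists>ps. LI Z xs ps"
proof -
  have "finite (\<Union>x\<in>set xs. keys x)" "\<forall>x\<in>set xs. keys x \<subseteq> (\<Union>x\<in>set xs. keys x)"
    by auto
  then obtain ps piv where span: "kspan (set ps) = kspan (set xs)"
    and rref: "is_rref (col_before Z) ps piv"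
    using rref_exists[OF transp_col_before[OF assms] totalp_col_before] by blast
  have pivot: "\<forall>i<length ps. is_pivot Z (ps ! i) (piv i) \<and> lookup (ps ! i) (piv i) = 1"
    unfolding is_pivot_def using is_rrefD(1,2,3)[OF rref] by blast
  have nonzero: "\<forall>p\<in>set ps. p \<noteq> 0"
  proof
    fix p assume "p \<in> set ps"
    then obtain i where "i < length ps" "p = ps ! i" by (auto simp: in_set_conv_nth)
    then show "p \<noteq> 0" using pivot by auto
  qed
  have "LI Z xs ps"
    unfolding LI_def using span nonzero pivot is_rrefD(4,5)[OF rref]
    by (intro conjI exI[of _ piv] allI impI) auto
  then show ?thesis ..
qed

text \<open>For tau take the graded lexicographic order; an echelon basis of span H with respect to the
  reversed order has the pivots as leading terms.\<close>
lemma step_i_exists: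
  assumes "distinct Z"
  shows "\<exists>gs'. step_i n \<delta> gs Z gs'"
proof -
  define H where "H = [var i * g. i \<leftarrow> [0..<n], i \<notin> set Z, g \<leftarrow> gs]"
  define tau where "tau = weight_lex tdeg"
  have tau: "term_order n tau" "degree_compatible n tau"
    unfolding tau_def degree_compatible_def
    by (auto intro!: term_order_weight_lex simp: weight_lex_def tdeg_eq_weight weight_add)
  have irrefl: "\<not> tau t t" and trans: "transp tau" and total: "totalp tau\<inverse>\<inverse>" for t
    unfolding tau_def using weight_lex_irrefl transp_weight_lex totalp_weight_lex
    by (auto simp: totalp_on_def)
  obtain hs piv where hs: "kspan (set hs) = kspan (set H)" and rref: "is_rref tau\<inverse>\<inverse> hs piv"
    using rref_exists[of "tau\<inverse>\<inverse>" "\<Union>h\<in>set H. keys h" H] trans total by auto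
  have LT: "is_LT tau (hs ! i) t \<longleftrightarrow> t = piv i" if i: "i < length hs" for i t
  proof
    assume t: "is_LT tau (hs ! i) t"
    show "t = piv i"
    proof (rule ccontr)
      assume "t \<noteq> piv i"
      then have "tau t (piv i)" "tau (piv i) t"
        using t is_rrefD(2,3)[OF rref i] unfolding is_LT_def by auto
      then show False using irrefl transpD[OF trans] by blast
    qed
  qed (use is_rrefD(2,3)[OF rref i] in \<open>auto simp: is_LT_def\<close>)
  have "\<forall>i j. i < j \<and> j < length hs \<longrightarrow> \<not> (\<exists>t. is_LT tau (hs ! i) t \<and> is_LT tau (hs ! j) t)"
  proof (intro allI impI notI)
    fix i j assume ij: "i < j \<and> j < length hs" and "\<exists>t. is_LT tau (hs ! i) t \<and> is_LT tau (hs ! j) t"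
    then have "piv i = piv j" using LT by auto
    moreover have "tau (piv j) (piv i)" using is_rrefD(4)[OF rref, of i j] ij by simp
    ultimately show False using irrefl by simp
  qed
  moreover have "\<forall>i<length hs. \<exists>t. is_LT tau (hs ! i) t"
    using LT by blast
  moreover obtain gs' where "LI Z (gs @ filter (\<lambda>h. pdeg h \<le> \<delta>) hs) gs'"
    using LI_exists[OF assms] by blast
  ultimately have "step_i n \<delta> gs Z gs'"
    unfolding step_i_def Let_def H_def[symmetric]
    using tau hs is_rref_distinct[OF rref] is_rref_independent[OF rref] by blast
  then show ?thesis ..
qed

section \<open>Approximation modulo the ideal\<close>

definition ideal_approx :: "nat \<Rightarrow> 'a::field mpoly list \<Rightarrow> monom set \<Rightarrow> 'a mpoly \<Rightarrow> bool" where
  "ideal_approx n gs E p \<longleftrightarrow> (\<exists>G\<in>ideal_P n gs. keys (G - p) \<subseteq> E)"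

definition light_terms :: "nat set \<Rightarrow> (nat \<Rightarrow> nat) \<Rightarrow> nat \<Rightarrow> monom set" where
  "light_terms Zs w B = {t. (\<forall>z\<in>Zs. lookup t z = 0) \<and> weight w t < B}"

lemma ideal_approx_mono: "E \<subseteq> E' \<Longrightarrow> ideal_approx n gs E p \<Longrightarrow> ideal_approx n gs E' p"
  unfolding ideal_approx_def by blast

lemma ideal_approx_diff:
  assumes "ideal_approx n gs E p" and "keys (p - q) \<subseteq> E"
  shows "ideal_approx n gs E q"
proof -
  obtain G where "G \<in> ideal_P n gs" "keys (G - p) \<subseteq> E"
    using assms(1) unfolding ideal_approx_def by blast
  moreover have "G - q = (G - p) + (p - q)" by simp
  ultimately show ?thesis
    unfolding ideal_approx_def using keys_add[of "G - p" "p - q"] assms(2) by auto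
qed

lemma subspace_ideal_approx: "K.subspace {p. ideal_approx n gs E p}"
proof (rule K.subspaceI)
  show "0 \<in> {p. ideal_approx n gs E p}"
    unfolding ideal_approx_def using K.subspace_0[OF subspace_ideal_P] by force
next
  fix p q assume "p \<in> {p. ideal_approx n gs E p}" "q \<in> {p. ideal_approx n gs E p}"
  then obtain G H where G: "G \<in> ideal_P n gs" "keys (G - p) \<subseteq> E"
    and H: "H \<in> ideal_P n gs" "keys (H - q) \<subseteq> E"
    unfolding ideal_approx_def by blast
  have eq: "(G + H) - (p + q) = (G - p) + (H - q)" by simp
  have "keys ((G + H) - (p + q)) \<subseteq> keys (G - p) \<union> keys (H - q)"
    unfolding eq by (rule keys_add)
  then have "keys ((G + H) - (p + q)) \<subseteq> E" using G(2) H(2) by blast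
  then show "p + q \<in> {p. ideal_approx n gs E p}"
    unfolding ideal_approx_def using ideal_P_add[OF G(1) H(1)] by blast
next
  fix c p assume "p \<in> {p. ideal_approx n gs E p}"
  then obtain G where G: "G \<in> ideal_P n gs" "keys (G - p) \<subseteq> E"
    unfolding ideal_approx_def by blast
  have "keys (smul c G - smul c p) \<subseteq> E"
    using G(2) keys_smul_subset[of c "G - p"] by (simp add: K.scale_right_diff_distrib)
  then show "smul c p \<in> {p. ideal_approx n gs E p}"
    unfolding ideal_approx_def using K.subspace_scale[OF subspace_ideal_P G(1)] by blast
qed

lemma ideal_approx_mult_var:
  assumes "i < n" and "ideal_approx n gs E p"
  shows "ideal_approx n gs ((+) (var_term i) ` E) (var i * p)"
proof -
  obtain G where G: "G \<in> ideal_P n gs" "keys (G - p) \<subseteq> E"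
    using assms(2) unfolding ideal_approx_def by blast
  have "keys (var i * G - var i * p) \<subseteq> (+) (var_term i) ` keys (G - p)"
    using keys_mult[of "var i" "G - p"] by (auto simp: right_diff_distrib)
  then show ?thesis
    unfolding ideal_approx_def using G ideal_P_mult[OF G(1) in_P_var[OF assms(1)]] by blast
qed

lemma lookup_var_term: "lookup (var_term i) j = (if j = i then 1 else 0)"
  unfolding var_term_def by (simp add: lookup_single)

lemma light_terms_shift:
  assumes "i \<notin> Zs"
  shows "(+) (var_term i) ` light_terms Zs w B \<subseteq> light_terms Zs w (w i + B)"
proof
  fix t' assume "t' \<in> (+) (var_term i) ` light_terms Zs w B"
  then obtain t where t: "t \<in> light_terms Zs w B" "t' = var_term i + t" by blast
  with assms show "t' \<in> light_terms Zs w (w i + B)"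
    unfolding light_terms_def by (auto simp: weight_add lookup_add lookup_var_term)
qed

lemma light_terms_reweight:
  assumes "Zs' \<subseteq> Zs" and "\<forall>i. i \<notin> Zs \<longrightarrow> w' i = w i" and "B \<le> B'"
  shows "light_terms Zs w B \<subseteq> light_terms Zs' w' B'"
proof
  fix t assume t: "t \<in> light_terms Zs w B"
  have "weight w' t = weight w t"
  proof (rule weight_cong)
    fix i assume "i \<in> keys t"
    then have "i \<notin> Zs" using t unfolding light_terms_def by (auto simp: in_keys_iff)
    then show "w' i = w i" using assms(2) by blast
  qed
  then show "t \<in> light_terms Zs' w' B'"
    using t assms(1,3) unfolding light_terms_def by auto
qed

lemma ideal_approx_mult_var_light:
  assumes "i < n" and "i \<notin> Zs" and "w i + B \<le> d"
    and "ideal_approx n gs (light_terms Zs w B) p"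
  shows "ideal_approx n gs (light_terms Zs w d) (var i * p)"
proof -
  have "(+) (var_term i) ` light_terms Zs w B \<subseteq> light_terms Zs w d"
    using light_terms_shift[OF assms(2)] light_terms_reweight[of Zs Zs w w "w i + B" d] assms(3)
    by blast
  then show ?thesis
    using ideal_approx_mult_var[OF assms(1,4)] ideal_approx_mono by blast
qed

lemma lookup_restrictZ: "lookup (restrictZ Zs p) t = (if \<exists>z\<in>Zs. 0 < lookup t z then lookup p t else 0)"
  unfolding restrictZ_def by (simp add: lookup_mapp when_def in_keys_iff)

lemma keys_restrictZ: "keys (restrictZ Zs p) \<subseteq> keys p"
  unfolding restrictZ_def by (rule keys_mapp_subset)

lemma keys_diff_restrictZ: "t \<in> keys (p - restrictZ Zs p) \<Longrightarrow> t \<in> keys p \<and> (\<forall>z\<in>Zs. lookup t z = 0)"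
  by (auto simp: in_keys_iff lookup_minus lookup_restrictZ split: if_splits)

lemma ideal_approx_restrictZ:
  assumes deg: "keys p \<subseteq> {t. tdeg t \<le> \<delta>}" and p: "ideal_approx n gs (light_terms Zs w d) p"
    and Zs': "Zs' \<subseteq> Zs" and off: "\<forall>i. i \<notin> Zs \<longrightarrow> w' i = w i" and w': "\<forall>i. w' i \<le> d"
    and \<delta>: "1 \<le> \<delta>"
  shows "ideal_approx n gs (light_terms Zs' w' (d * \<delta> + 1)) (restrictZ Zs' p)"
proof (rule ideal_approx_diff)
  have "d \<le> d * \<delta>" using \<delta> by simp
  then have "light_terms Zs w d \<subseteq> light_terms Zs' w' (d * \<delta> + 1)"
    by (intro light_terms_reweight[OF Zs' off]) linarith
  then show "ideal_approx n gs (light_terms Zs' w' (d * \<delta> + 1)) p"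
    using ideal_approx_mono p by blast
  show "keys (p - restrictZ Zs' p) \<subseteq> light_terms Zs' w' (d * \<delta> + 1)"
  proof
    fix t assume "t \<in> keys (p - restrictZ Zs' p)"
    then have t: "t \<in> keys p" "\<forall>z\<in>Zs'. lookup t z = 0" by (auto dest: keys_diff_restrictZ)
    have "weight w' t \<le> d * tdeg t" using w' by (intro weight_le_tdeg) auto
    also have "\<dots> \<le> d * \<delta>" using deg t(1) by auto
    finally show "t \<in> light_terms Zs' w' (d * \<delta> + 1)"
      using t(2) unfolding light_terms_def by simp
  qed
qed

lemma pdeg_ge: "t \<in> keys p \<Longrightarrow> tdeg t \<le> pdeg p"
  unfolding pdeg_def by (rule Max_ge) auto

lemma delta_ge: "g \<in> set gs \<Longrightarrow> pdeg g \<le> delta gs"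
  unfolding delta_def by (rule Max_ge) auto

lemma step_i_ideal_approx:
  assumes step: "step_i n \<delta> L Z L'"
    and L: "\<forall>p\<in>set L. keys p \<subseteq> {t. tdeg t \<le> \<delta>} \<and> ideal_approx n gs (light_terms (set Z) w B) p"
    and bound: "\<forall>i. w i + B \<le> d"
  shows "\<forall>p\<in>set L'. keys p \<subseteq> {t. tdeg t \<le> \<delta>} \<and> ideal_approx n gs (light_terms (set Z) w d) p"
proof -
  define H where "H = [var i * g. i \<leftarrow> [0..<n], i \<notin> set Z, g \<leftarrow> L]"
  obtain hs where hs: "kspan (set hs) = kspan (set H)"
    and LI: "LI Z (L @ filter (\<lambda>h. pdeg h \<le> \<delta>) hs) L'"
    using step unfolding step_i_def Let_def H_def by blast
  let ?S = "{p. keys p \<subseteq> {t. tdeg t \<le> \<delta>}} \<inter> {p. ideal_approx n gs (light_terms (set Z) w d) p}"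
  have "set H \<subseteq> {p. ideal_approx n gs (light_terms (set Z) w d) p}"
  proof
    fix h assume "h \<in> set H"
    then obtain i g where "i < n" "i \<notin> set Z" "g \<in> set L" "h = var i * g"
      unfolding H_def by auto
    then show "h \<in> {p. ideal_approx n gs (light_terms (set Z) w d) p}"
      using ideal_approx_mult_var_light bound L by blast
  qed
  then have span_H: "kspan (set hs) \<subseteq> {p. ideal_approx n gs (light_terms (set Z) w d) p}"
    unfolding hs by (rule K.span_minimal[OF _ subspace_ideal_approx])
  have "light_terms (set Z) w B \<subseteq> light_terms (set Z) w d"
    using bound by (intro light_terms_reweight) auto
  then have "set L \<subseteq> ?S"
    using L ideal_approx_mono by blast
  moreover have "set (filter (\<lambda>h. pdeg h \<le> \<delta>) hs) \<subseteq> ?S"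
  proof
    fix h assume "h \<in> set (filter (\<lambda>h. pdeg h \<le> \<delta>) hs)"
    then have "h \<in> set hs" "pdeg h \<le> \<delta>" by auto
    then show "h \<in> ?S"
      using span_H K.span_base pdeg_ge order_trans by fastforce
  qed
  moreover have "K.subspace ?S"
    by (intro K.subspace_inter subspace_keys_subset subspace_ideal_approx)
  ultimately have "kspan (set (L @ filter (\<lambda>h. pdeg h \<le> \<delta>) hs)) \<subseteq> ?S"
    by (intro K.span_minimal) auto
  moreover have "kspan (set L') = kspan (set (L @ filter (\<lambda>h. pdeg h \<le> \<delta>) hs))"
    using LI unfolding LI_def by blast
  ultimately show ?thesis using K.span_base by blast
qed

section \<open>Correctness of OPTCHECK\<close>

definition separating_weights :: "nat \<Rightarrow> 'a::field mpoly list \<Rightarrow> nat list \<Rightarrow> nat list \<Rightarrow> bool" where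
  "separating_weights n gs Z W \<longleftrightarrow> length W = n \<and>
     (\<exists>fs. length fs = length Z \<and> set fs \<subseteq> ideal_P n gs \<and> Z_separating n Z fs \<and>
           (\<forall>lt. term_order n lt \<and> W_compatible n W lt \<longrightarrow>
                 (\<forall>i<length Z. is_LT lt (fs ! i) (var_term (Z ! i)))))"

lemma is_LT_of_separator:
  assumes gs: "\<forall>g\<in>set gs. in_P n g" and z: "z < n" and G: "G \<in> ideal_P n gs"
    and tail: "keys (G - var z) \<subseteq> light_terms {} w (w z)"
    and lt: "W_compatible n (map w [0..<n]) lt"
  shows "is_LT lt G (var_term z)"
proof -
  have "var_term z \<notin> keys (G - var z)"
    using tail unfolding light_terms_def by auto
  then have "lookup G (var_term z) = 1"
    by (simp add: in_keys_iff lookup_minus var_def)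
  moreover have "lt s (var_term z)" if s: "s \<in> keys G" "s \<noteq> var_term z" for s
  proof -
    have "s \<in> keys (G - var z)"
      using s by (simp add: in_keys_iff lookup_minus var_def lookup_single)
    then have "weight w s < weight w (var_term z)"
      using tail unfolding light_terms_def by auto
    moreover have "is_term n s"
      using in_P_of_ideal_P[OF gs G] s(1) unfolding in_P_def by blast
    ultimately have "wdeg (map w [0..<n]) s < wdeg (map w [0..<n]) (var_term z)"
      using is_term_var_term[OF z] by (simp add: wdeg_eq_weight)
    then show ?thesis
      using lt \<open>is_term n s\<close> is_term_var_term[OF z] unfolding W_compatible_def by blast
  qed
  ultimately show ?thesis
    unfolding is_LT_def by (simp add: in_keys_iff)
qed

lemma separating_weights_of_separators:
  assumes gs: "\<forall>g\<in>set gs. in_P n g" and Z: "set Z \<subseteq> {..<n}"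
    and sep: "\<forall>z\<in>set Z. ideal_approx n gs (light_terms {} w (w z)) (var z)"
  shows "separating_weights n gs Z (map w [0..<n])"
proof -
  have "\<forall>z\<in>set Z. \<exists>G. G \<in> ideal_P n gs \<and> keys (G - var z) \<subseteq> light_terms {} w (w z)"
    using sep unfolding ideal_approx_def by blast
  from bchoice[OF this] obtain F
    where F: "\<forall>z\<in>set Z. F z \<in> ideal_P n gs \<and> keys (F z - var z) \<subseteq> light_terms {} w (w z)"
    by blast
  define fs where "fs = map F Z"
  have LT: "\<forall>i<length Z. is_LT lt (fs ! i) (var_term (Z ! i))"
    if "W_compatible n (map w [0..<n]) lt" for lt
  proof (intro allI impI)
    fix i assume "i < length Z"
    then have "Z ! i \<in> set Z" by simp
    then have "Z ! i < n" "F (Z ! i) \<in> ideal_P n gs"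
      "keys (F (Z ! i) - var (Z ! i)) \<subseteq> light_terms {} w (w (Z ! i))"
      using F Z by auto
    then show "is_LT lt (fs ! i) (var_term (Z ! i))"
      unfolding fs_def using \<open>i < length Z\<close> is_LT_of_separator[OF gs _ _ _ that] by simp
  qed
  let ?lt = "weight_lex (wdeg (map w [0..<n]))"
  have "W_compatible n (map w [0..<n]) ?lt"
    unfolding W_compatible_def weight_lex_def by simp
  then have "Z_separating n Z fs"
    unfolding Z_separating_def using term_order_weight_lex[of "wdeg (map w [0..<n])", OF wdeg_add] LT
    by (intro conjI exI[of _ ?lt]) (auto simp: fs_def)
  moreover have "set fs \<subseteq> ideal_P n gs"
    unfolding fs_def using F by auto
  ultimately show ?thesis
    unfolding separating_weights_def using LT by (intro conjI exI[of _ fs]) (auto simp: fs_def)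
qed

definition oc_invariant :: "nat \<Rightarrow> 'a::field mpoly list \<Rightarrow> nat list \<Rightarrow> 'a mpoly oc_config \<Rightarrow> bool" where
  "oc_invariant n gs Z0 c = (case c of
     Run L Z w d \<Rightarrow> distinct Z \<and> set Z \<subseteq> set Z0 \<and> (\<forall>i. w i + (d + 1) div 2 \<le> d) \<and>
       (\<forall>p\<in>set L. keys p \<subseteq> {t. tdeg t \<le> delta gs} \<and>
                  ideal_approx n gs (light_terms (set Z) w ((d + 1) div 2)) p) \<and>
       (\<forall>z\<in>set Z0 - set Z. ideal_approx n gs (light_terms (set Z) w (w z)) (var z))
   | Done None \<Rightarrow> True
   | Done (Some W) \<Rightarrow> separating_weights n gs Z0 W)"

lemma oc_invariant_init:
  assumes "distinct Z0"
  shows "oc_invariant n gs Z0 (oc_init n gs Z0)"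
proof -
  have "keys (restrictZ (set Z0) g) \<subseteq> {t. tdeg t \<le> delta gs} \<and>
        ideal_approx n gs (light_terms (set Z0) (\<lambda>_. 0) 1) (restrictZ (set Z0) g)"
    if g: "g \<in> set gs" for g
  proof
    show "keys (restrictZ (set Z0) g) \<subseteq> {t. tdeg t \<le> delta gs}"
    proof
      fix t assume "t \<in> keys (restrictZ (set Z0) g)"
      then have "tdeg t \<le> pdeg g" using keys_restrictZ pdeg_ge by blast
      then show "t \<in> {t. tdeg t \<le> delta gs}" using delta_ge[OF g] by simp
    qed
    have "keys (g - restrictZ (set Z0) g) \<subseteq> light_terms (set Z0) (\<lambda>_. 0) 1"
      unfolding light_terms_def weight_def by (auto dest: keys_diff_restrictZ)
    then show "ideal_approx n gs (light_terms (set Z0) (\<lambda>_. 0) 1) (restrictZ (set Z0) g)"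
      unfolding ideal_approx_def using ideal_P_generator[OF g] by blast
  qed
  then show ?thesis
    unfolding oc_init_def oc_invariant_def Let_def using assms by (simp split: if_split)
qed

lemma separators_update:
  assumes "Zs \<subseteq> Z0" "Zt \<subseteq> Zs" "Zs' = Zs - Zt"
    and w': "\<forall>k. k \<notin> Zt \<longrightarrow> w' k = w k" "\<forall>k\<in>Zt. w' k = d"
    and old: "\<forall>z\<in>Z0 - Zs. ideal_approx n gs (light_terms Zs w (w z)) (var z)"
    and new: "\<forall>z\<in>Zt. ideal_approx n gs (light_terms Zs w d) (var z)"
  shows "\<forall>z\<in>Z0 - Zs'. ideal_approx n gs (light_terms Zs' w' (w' z)) (var z)"
proof
  have off: "\<forall>k. k \<notin> Zs \<longrightarrow> w' k = w k" using w'(1) assms(2) by blast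
  have Zs': "Zs' \<subseteq> Zs" using assms(3) by blast
  fix z assume "z \<in> Z0 - Zs'"
  then consider "z \<in> Z0 - Zs" "w' z = w z" | "z \<in> Zt" "w' z = d"
    using assms(2,3) w' by blast
  then show "ideal_approx n gs (light_terms Zs' w' (w' z)) (var z)"
  proof cases
    case 1
    then have "light_terms Zs w (w z) \<subseteq> light_terms Zs' w' (w' z)"
      by (intro light_terms_reweight[OF Zs' off]) auto
    then show ?thesis using old 1(1) ideal_approx_mono by blast
  next
    case 2
    then have "light_terms Zs w d \<subseteq> light_terms Zs' w' (w' z)"
      by (intro light_terms_reweight[OF Zs' off]) auto
    then show ?thesis using new 2(1) ideal_approx_mono by blast
  qed
qed

lemma oc_invariant_step:
  assumes delta: "1 \<le> delta gs" and gs: "\<forall>g\<in>set gs. in_P n g" and Z0: "set Z0 \<subseteq> {..<n}"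
    and step: "oc_step n (delta gs) c c'" and inv: "oc_invariant n gs Z0 c"
  shows "oc_invariant n gs Z0 c'"
  using step
proof cases
  case fail
  then show ?thesis by (simp add: oc_invariant_def)
next
  case (cont L Z L' Zt Z' w' d w L'' d')
  let ?\<delta> = "delta gs"
  have dist: "distinct Z" and Z0Z: "set Z \<subseteq> set Z0" and bound: "\<forall>i. w i + (d + 1) div 2 \<le> d"
    and L: "\<forall>p\<in>set L. keys p \<subseteq> {t. tdeg t \<le> ?\<delta>} \<and>
                       ideal_approx n gs (light_terms (set Z) w ((d + 1) div 2)) p"
    and old: "\<forall>z\<in>set Z0 - set Z. ideal_approx n gs (light_terms (set Z) w (w z)) (var z)"
    using inv unfolding cont(1) oc_invariant_def by simp_all
  have L': "\<forall>p\<in>set L'. keys p \<subseteq> {t. tdeg t \<le> ?\<delta>} \<and> ideal_approx n gs (light_terms (set Z) w d) p"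
    using step_i_ideal_approx[OF cont(2) L bound] .
  have Zt: "Zt \<subseteq> set Z" "set Z' = set Z - Zt"
    unfolding cont(3,5) by auto
  have w'_Zt: "\<forall>k. k \<notin> Zt \<longrightarrow> w' k = w k" "\<forall>k\<in>Zt. w' k = d"
    unfolding cont(6) by auto
  have sep: "\<forall>z\<in>set Z0 - set Z'. ideal_approx n gs (light_terms (set Z') w' (w' z)) (var z)"
    using separators_update[OF Z0Z Zt w'_Zt old] L' unfolding cont(3) by blast
  show ?thesis
  proof (cases "Z' = []")
    case True
    then have "c' = Done (Some (map w' [0..<n]))" using cont(9) by simp
    then show ?thesis
      using separating_weights_of_separators[OF gs Z0] sep True by (simp add: oc_invariant_def)
  next
    case False
    then have c': "c' = Run L'' Z' w' d'" using cont(9) by simp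
    have Z': "set Z' \<subseteq> set Z" and w'_off: "\<forall>i. i \<notin> set Z \<longrightarrow> w' i = w i"
      using Zt w'_Zt by auto
    have w'_le: "\<forall>i. w' i \<le> d"
    proof
      fix i show "w' i \<le> d" using bound[rule_format, of i] unfolding cont(6) by auto
    qed
    have "\<forall>p\<in>set L''. keys p \<subseteq> {t. tdeg t \<le> ?\<delta>} \<and>
                 ideal_approx n gs (light_terms (set Z') w' (d * ?\<delta> + 1)) p"
      unfolding cont(7) using L' ideal_approx_restrictZ[OF _ _ Z' w'_off w'_le delta] keys_restrictZ
      by fastforce
    moreover have "(d' + 1) div 2 = d * ?\<delta> + 1" and "d' = 2 * (d * ?\<delta>) + 1"
      unfolding cont(8) by (simp_all add: algebra_simps)
    moreover have "\<forall>i. w' i + (d' + 1) div 2 \<le> d'"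
    proof
      fix i show "w' i + (d' + 1) div 2 \<le> d'"
        using w'_le[rule_format, of i] mult_le_mono2[OF delta, of d] calculation(2,3) by linarith
    qed
    moreover have "distinct Z'" "set Z' \<subseteq> set Z0"
      using dist Z' Z0Z unfolding cont(5) by auto
    ultimately show ?thesis
      unfolding c' oc_invariant_def using sep by simp
  qed
qed

lemma tdeg_eq_0_iff: "tdeg t = 0 \<longleftrightarrow> t = 0"
  unfolding tdeg_def by (auto simp: in_keys_iff intro!: poly_mapping_eqI)

text \<open>A generator of degree 0 would be a nonzero constant, i.e. a unit.\<close>
lemma delta_ge_1:
  fixes gs :: "'a::field mpoly list"
  assumes "gs \<noteq> []" and gs: "\<forall>g\<in>set gs. g \<noteq> 0 \<and> in_P n g" and proper: "1 \<notin> ideal_P n gs"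
  shows "1 \<le> delta gs"
proof (rule ccontr)
  assume "\<not> 1 \<le> delta gs"
  obtain g where g: "g \<in> set gs" using assms(1) by fastforce
  have "keys g \<subseteq> {0}"
  proof
    fix t assume "t \<in> keys g"
    then have "tdeg t \<le> delta gs" using pdeg_ge delta_ge[OF g] order_trans by blast
    then have "tdeg t = 0" using \<open>\<not> 1 \<le> delta gs\<close> by linarith
    then show "t \<in> {0}" using tdeg_eq_0_iff by simp
  qed
  define c where "c = lookup g 0"
  have const: "g = Poly_Mapping.single 0 c"
    unfolding c_def using \<open>keys g \<subseteq> {0}\<close>
    by (intro poly_mapping_eqI) (auto simp: lookup_single in_keys_iff when_def)
  then have "c \<noteq> 0" using gs g by force
  then have "Poly_Mapping.single 0 (1 / c) * g = 1"
    unfolding const by (simp add: mult_single single_one)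
  moreover have "Poly_Mapping.single 0 (1 / c) * g \<in> ideal_P n gs"
    using ideal_P_mult[OF ideal_P_generator[OF g] in_P_const] .
  ultimately show False using proper by simp
qed

lemma oc_progress:
  assumes "oc_invariant n gs Z0 c"
  shows "(\<exists>r. c = Done r) \<or> (\<exists>c'. oc_step n \<delta> c c')"
proof (cases c)
  case (Run L Z w d)
  then have "distinct Z" using assms unfolding oc_invariant_def by simp
  then obtain L' where step: "step_i n \<delta> L Z L'" using step_i_exists by blast
  show ?thesis
  proof (cases "{z \<in> set Z. var z \<in> set L'} = {}")
    case True
    then show ?thesis using oc_step.fail[OF step] Run by blast
  next
    case False
    then show ?thesis using oc_step.cont[OF step refl False refl refl refl refl refl] Run by blast
  qed
qed simp

definition oc_measure :: "'p oc_config \<Rightarrow> nat" where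
  "oc_measure c = (case c of Run _ Z _ _ \<Rightarrow> Suc (length Z) | Done _ \<Rightarrow> 0)"

lemma oc_measure_step: "oc_step n \<delta> c c' \<Longrightarrow> oc_measure c' < oc_measure c"
proof (induction rule: oc_step.induct)
  case (cont gs Z gs' Zt Z' w' d w gs'' d' c')
  then have "length Z' < length Z" by (auto intro!: length_filter_less)
  then show ?case using cont by (simp add: oc_measure_def)
qed (simp add: oc_measure_def)

lemma oc_invariant_reachable:
  assumes "1 \<le> delta gs" and "\<forall>g\<in>set gs. in_P n g" and "set Z0 \<subseteq> {..<n}" and "distinct Z0"
    and "oc_reachable n gs Z0 c"
  shows "oc_invariant n gs Z0 c"
  using assms(5) unfolding oc_reachable_def
proof (induction rule: rtranclp_induct)
  case base
  then show ?case using oc_invariant_init[OF assms(4)] .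
next
  case (step c c')
  then show ?case using oc_invariant_step[OF assms(1-3)] by blast
qed

theorem mainTheorem4:
  fixes n :: nat and gs :: "'a::field mpoly list" and Z :: "nat list"
  assumes gs_ne: "gs \<noteq> []"
    and gs_P: "\<forall>g\<in>set gs. g \<noteq> 0 \<and> in_P n g"
    and proper: "1 \<notin> ideal_P n gs"
    and Z_dist: "distinct Z" and Z_vars: "set Z \<subseteq> {..<n}"
  shows
    \<comment> \<open>termination: no run gets stuck before returning, and every run is finite\<close>
    "(\<forall>c. oc_reachable n gs Z c \<longrightarrow> (\<exists>r. c = Done r) \<or> (\<exists>c'. oc_step n (delta gs) c c'))
     \<and> wfP (\<lambda>c' c. oc_reachable n gs Z c \<and> oc_step n (delta gs) c c')
     \<and> (\<forall>W. oc_reachable n gs Z (Done (Some W)) \<longrightarrow>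
          length W = n \<and>
          (\<exists>fs. length fs = length Z \<and> set fs \<subseteq> ideal_P n gs \<and> Z_separating n Z fs \<and>
                (\<forall>lt. term_order n lt \<and> W_compatible n W lt \<longrightarrow>
                      (\<forall>i<length Z. is_LT lt (fs ! i) (var_term (Z ! i))))))"
proof -
  have gs: "\<forall>g\<in>set gs. in_P n g" using gs_P by blast
  have inv: "oc_invariant n gs Z c" if "oc_reachable n gs Z c" for c
    using oc_invariant_reachable[OF delta_ge_1[OF gs_ne gs_P proper] gs Z_vars Z_dist that] .
  have "\<forall>c. oc_reachable n gs Z c \<longrightarrow> (\<exists>r. c = Done r) \<or> (\<exists>c'. oc_step n (delta gs) c c')"
    using inv oc_progress by blast
  moreover have "wfP (\<lambda>c' c. oc_reachable n gs Z c \<and> oc_step n (delta gs) c c')"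
    by (rule wfp_if_convertible_to_nat[where f = oc_measure]) (use oc_measure_step in blast)
  moreover have "\<forall>W. oc_reachable n gs Z (Done (Some W)) \<longrightarrow> separating_weights n gs Z W"
  proof (intro allI impI)
    fix W assume "oc_reachable n gs Z (Done (Some W))"
    from inv[OF this] show "separating_weights n gs Z W" by (simp add: oc_invariant_def)
  qed
  ultimately show ?thesis
    unfolding separating_weights_def by blast
qed

end
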